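(* Consider proportional reinsurance with $I=1$, $m(t,y,u)=p-q+qu$ and $\sigma(t,y,u)=\sigma_0u$, where $p<q$ and $\sigma_0>0$. Under the ansatz $V(t,x,y)=U(x)\tilde V(t,y)$ for the value function, the optimal reinsurance-investment strategy (the maximiser in the HJB equation) is given in feedback form by $(u^*(t,x,y),a^*(t,x,y))$ with $$u^*(t,x,y)=\begin{cases}0,&(t,x,y)\in A_0,\\ \dfrac{(\sigma_1(t,y)^2+\sigma_2(t,y)^2)q-\mu(t,y)\sigma_0\sigma_1(t,y)}{\sigma_0^2\sigma_2(t,y)^2A(x)},&(t,x,y)\in(A_0\cup A_1)^c,\\ 1,&(t,x,y)\in A_1,\end{cases}$$ where $A_0=\{(t,x,y)\in[0,T]\times\mathbb R^2: q<\frac{\mu(t,y)\sigma_1(t,y)\sigma_0}{\sigma_1(t,y)^2+\sigma_2(t,y)^2}\}$, $A_1=\{(t,x,y)\in[0,T]\times\mathbb R^2: q>\frac{\sigma_0[\sigma_2(t,y)^2A(x)\sigma_0+\mu(t,y)\sigma_1(t,y)]}{\sigma_1(t,y)^2+\sigma_2(t,y)^2}\}$, and $$a^*(t,x,y)=\frac{\mu(t,y)-A(x)\sigma_0u^*(t,x,y)\sigma_1(t,y)}{A(x)(\sigma_1(t,y)^2+\sigma_2(t,y)^2)}.$$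
   Context: Independent Brownian motions $W^1,W^2,W^Y$; environmental process $dY_t=\mu_Y(t,Y_t)dt+\sigma_Y(t,Y_t)dW^Y_t$ with bounded Lipschitz $C^1$ coefficients; $\mu,\sigma_1,\sigma_2$ bounded continuous positive Lipschitz functions of $(t,y)$ with $\sigma_1+\sigma_2$ bounded away from zero. With retention $u_t\in[0,1]$ (fraction of risk kept) and amount $a_t$ invested in the risky asset, the surplus is $dX_t=\{m(t,Y_t,u_t)+a_t\mu(t,Y_t)\}dt+\{\sigma(t,Y_t,u_t)+a_t\sigma_1(t,Y_t)\}dW^1_t+a_t\sigma_2(t,Y_t)dW^2_t$, and the insurer maximises $\mathbb E[U(X_T)]$ over adapted strategies with $\mathbb E\int_0^Ta_t^2dt<\infty$; $V(t,x,y)$ denotes the value function, with HJB equation $0=V_t+\sup_{u,a}[\{m+a\mu\}V_x+\frac12\{(\sigma+a\sigma_1)^2+a^2\sigma_2^2\}V_{xx}]+\mu_YV_y+\frac12\sigma_Y^2V_{yy}$. $U$ is a SAHARA utility: $A(x):=-U''(x)/U'(x)=\alpha/\sqrt{b^2+(x-d)^2}$, $\alpha>0$, $b>0$, $d\in\mathbb R$. In this section the paper works under the ansatz that $V(t,x,y)=U(x)\tilde V(t,y)$ for some function $\tilde V$. *)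

theory Defs
  imports "HOL-Analysis.Analysis"
begin

definition sahara_A :: "real \<Rightarrow> real \<Rightarrow> real \<Rightarrow> real \<Rightarrow> real" where
  "sahara_A \<alpha> b d x = \<alpha> / sqrt (b^2 + (x - d)^2)"

text \<open>The (u,a)-dependent part of the HJB equation:
  {m + a mu} V_x + 1/2 {(sigma + a sigma_1)^2 + a^2 sigma_2^2} V_xx.\<close>
definition hjb_part :: "(real \<Rightarrow> real) \<Rightarrow> (real \<Rightarrow> real) \<Rightarrow> real \<Rightarrow> real \<Rightarrow> real
    \<Rightarrow> real \<Rightarrow> real \<Rightarrow> real \<Rightarrow> real \<Rightarrow> real" where
  "hjb_part m sig mu s1 s2 Vx Vxx u a =
     (m u + a * mu) * Vx + 1/2 * ((sig u + a * s1)^2 + a^2 * s2^2) * Vxx"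

definition region_A0 :: "real \<Rightarrow> real \<Rightarrow> real \<Rightarrow> (real \<Rightarrow> real \<Rightarrow> real)
    \<Rightarrow> (real \<Rightarrow> real \<Rightarrow> real) \<Rightarrow> (real \<Rightarrow> real \<Rightarrow> real) \<Rightarrow> (real \<times> real \<times> real) set" where
  "region_A0 T q \<sigma>0 mu s1 s2 = {(t, x, y). t \<in> {0..T} \<and>
     q < mu t y * s1 t y * \<sigma>0 / ((s1 t y)^2 + (s2 t y)^2)}"

definition region_A1 :: "real \<Rightarrow> real \<Rightarrow> real \<Rightarrow> (real \<Rightarrow> real) \<Rightarrow> (real \<Rightarrow> real \<Rightarrow> real)
    \<Rightarrow> (real \<Rightarrow> real \<Rightarrow> real) \<Rightarrow> (real \<Rightarrow> real \<Rightarrow> real) \<Rightarrow> (real \<times> real \<times> real) set" where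
  "region_A1 T q \<sigma>0 A mu s1 s2 = {(t, x, y). t \<in> {0..T} \<and>
     q > \<sigma>0 * ((s2 t y)^2 * A x * \<sigma>0 + mu t y * s1 t y) / ((s1 t y)^2 + (s2 t y)^2)}"

definition u_star :: "real \<Rightarrow> real \<Rightarrow> real \<Rightarrow> (real \<Rightarrow> real) \<Rightarrow> (real \<Rightarrow> real \<Rightarrow> real)
    \<Rightarrow> (real \<Rightarrow> real \<Rightarrow> real) \<Rightarrow> (real \<Rightarrow> real \<Rightarrow> real) \<Rightarrow> real \<Rightarrow> real \<Rightarrow> real \<Rightarrow> real" where
  "u_star T q \<sigma>0 A mu s1 s2 t x y =
     (if (t, x, y) \<in> region_A0 T q \<sigma>0 mu s1 s2 then 0
      else if (t, x, y) \<in> region_A1 T q \<sigma>0 A mu s1 s2 then 1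
      else (((s1 t y)^2 + (s2 t y)^2) * q - mu t y * \<sigma>0 * s1 t y)
           / (\<sigma>0^2 * (s2 t y)^2 * A x))"

definition a_star :: "real \<Rightarrow> real \<Rightarrow> real \<Rightarrow> (real \<Rightarrow> real) \<Rightarrow> (real \<Rightarrow> real \<Rightarrow> real)
    \<Rightarrow> (real \<Rightarrow> real \<Rightarrow> real) \<Rightarrow> (real \<Rightarrow> real \<Rightarrow> real) \<Rightarrow> real \<Rightarrow> real \<Rightarrow> real \<Rightarrow> real" where
  "a_star T q \<sigma>0 A mu s1 s2 t x y =
     (mu t y - A x * \<sigma>0 * u_star T q \<sigma>0 A mu s1 s2 t x y * s1 t y)
     / (A x * ((s1 t y)^2 + (s2 t y)^2))"

end

theory Submission
  imports Defs
begin

text \<open>Because \<open>V\<^sub>x\<^sub>x = -A(x) V\<^sub>x\<close> with \<open>V\<^sub>x > 0\<close>, the maximand of the HJB equation is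
  \<open>V\<^sub>x\<close> times a strictly concave quadratic in \<open>(u, a)\<close>. Completing the square in \<open>a\<close>
  gives the optimal investment for each fixed retention \<open>u\<close>; what remains is a concave
  parabola in \<open>u\<close> whose vertex is the interior formula for \<open>u\<^sup>*\<close>. Its unique maximiser
  over \<open>[0,1]\<close> is the vertex clamped to \<open>[0,1]\<close>, and \<open>A\<^sub>0\<close>, \<open>A\<^sub>1\<close> are exactly the sets
  where the vertex lies below \<open>0\<close>, resp. above \<open>1\<close>.\<close>

definition hjb_gain :: "real \<Rightarrow> real \<Rightarrow> real \<Rightarrow> real \<Rightarrow> real \<Rightarrow> real \<Rightarrow> real \<Rightarrow> real \<Rightarrow> real" where
  "hjb_gain q K \<mu> \<sigma>0 \<sigma>1 \<sigma>2 u a =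
     q * u + a * \<mu> - K / 2 * ((\<sigma>0 * u + a * \<sigma>1)^2 + a^2 * \<sigma>2^2)"

definition best_investment :: "real \<Rightarrow> real \<Rightarrow> real \<Rightarrow> real \<Rightarrow> real \<Rightarrow> real \<Rightarrow> real" where
  "best_investment K \<mu> \<sigma>0 \<sigma>1 \<sigma>2 u = (\<mu> - K * \<sigma>0 * u * \<sigma>1) / (K * (\<sigma>1^2 + \<sigma>2^2))"

definition reduced_gain :: "real \<Rightarrow> real \<Rightarrow> real \<Rightarrow> real \<Rightarrow> real \<Rightarrow> real \<Rightarrow> real \<Rightarrow> real" where
  "reduced_gain q K \<mu> \<sigma>0 \<sigma>1 \<sigma>2 u =
     q * u - K * \<sigma>0^2 * u^2 / 2 + (\<mu> - K * \<sigma>0 * \<sigma>1 * u)^2 / (2 * K * (\<sigma>1^2 + \<sigma>2^2))"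

definition retention_vertex :: "real \<Rightarrow> real \<Rightarrow> real \<Rightarrow> real \<Rightarrow> real \<Rightarrow> real \<Rightarrow> real" where
  "retention_vertex q K \<mu> \<sigma>0 \<sigma>1 \<sigma>2 =
     ((\<sigma>1^2 + \<sigma>2^2) * q - \<mu> * \<sigma>0 * \<sigma>1) / (\<sigma>0^2 * \<sigma>2^2 * K)"

lemma sq_dist_clamp_less:
  fixes l h u u0 :: real
  assumes "u \<in> {l..h}" "u \<noteq> max l (min h u0)"
  shows "(max l (min h u0) - u0)^2 < (u - u0)^2"
proof -
  have "\<bar>max l (min h u0) - u0\<bar> < \<bar>u - u0\<bar>"
    using assms by (auto simp: max_def min_def)
  then show ?thesis
    by (metis abs_le_square_iff not_le)
qed

lemma hjb_gain_best_investment: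
  assumes "K \<noteq> 0" "\<sigma>1^2 + \<sigma>2^2 \<noteq> 0"
  shows "hjb_gain q K \<mu> \<sigma>0 \<sigma>1 \<sigma>2 u (best_investment K \<mu> \<sigma>0 \<sigma>1 \<sigma>2 u)
           = reduced_gain q K \<mu> \<sigma>0 \<sigma>1 \<sigma>2 u"
proof -
  define S where "S = \<sigma>1^2 + \<sigma>2^2"
  define b where "b = best_investment K \<mu> \<sigma>0 \<sigma>1 \<sigma>2 u"
  have "S \<noteq> 0"
    using assms(2) by (simp add: S_def)
  have b: "K * S * b = \<mu> - K * \<sigma>0 * u * \<sigma>1"
    using assms unfolding b_def best_investment_def S_def by simp
  have "hjb_gain q K \<mu> \<sigma>0 \<sigma>1 \<sigma>2 u b
        = q * u - K * \<sigma>0^2 * u^2 / 2 + b * (\<mu> - K * \<sigma>0 * u * \<sigma>1) - K * S * b^2 / 2"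
    unfolding hjb_gain_def S_def by (simp add: power2_eq_square algebra_simps)
  also have "\<dots> = q * u - K * \<sigma>0^2 * u^2 / 2 + K * S * b^2 / 2"
    unfolding b[symmetric] by (simp add: power2_eq_square)
  also have "\<dots> = q * u - K * \<sigma>0^2 * u^2 / 2 + (K * S * b)^2 / (2 * K * S)"
    using assms(1) \<open>S \<noteq> 0\<close> by (simp add: power2_eq_square)
  finally have "hjb_gain q K \<mu> \<sigma>0 \<sigma>1 \<sigma>2 u b
      = q * u - K * \<sigma>0^2 * u^2 / 2 + (\<mu> - K * \<sigma>0 * u * \<sigma>1)^2 / (2 * K * S)"
    unfolding b .
  then show ?thesis
    by (simp add: b_def reduced_gain_def S_def mult_ac)
qed

lemma hjb_gain_complete_square:
  assumes "K \<noteq> 0" "\<sigma>1^2 + \<sigma>2^2 \<noteq> 0"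
  shows "hjb_gain q K \<mu> \<sigma>0 \<sigma>1 \<sigma>2 u a = reduced_gain q K \<mu> \<sigma>0 \<sigma>1 \<sigma>2 u
           - K * (\<sigma>1^2 + \<sigma>2^2) / 2 * (a - best_investment K \<mu> \<sigma>0 \<sigma>1 \<sigma>2 u)^2"
proof -
  define S where "S = \<sigma>1^2 + \<sigma>2^2"
  have "S \<noteq> 0"
    using assms(2) by (simp add: S_def)
  then have "hjb_gain q K \<mu> \<sigma>0 \<sigma>1 \<sigma>2 u a
      = hjb_gain q K \<mu> \<sigma>0 \<sigma>1 \<sigma>2 u (best_investment K \<mu> \<sigma>0 \<sigma>1 \<sigma>2 u)
        - K * S / 2 * (a - best_investment K \<mu> \<sigma>0 \<sigma>1 \<sigma>2 u)^2"
    using assms(1) unfolding hjb_gain_def best_investment_def S_def[symmetric]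
    by (simp add: field_simps power2_eq_square) (simp add: S_def power2_eq_square algebra_simps)
  then show ?thesis
    using hjb_gain_best_investment[OF assms] by (simp add: S_def)
qed

lemma reduced_gain_vertex_form:
  fixes q K \<mu> \<sigma>0 \<sigma>1 \<sigma>2 u :: real
  assumes "K \<noteq> 0" "\<sigma>0 \<noteq> 0" "\<sigma>2 \<noteq> 0"
  defines "v \<equiv> retention_vertex q K \<mu> \<sigma>0 \<sigma>1 \<sigma>2"
  shows "reduced_gain q K \<mu> \<sigma>0 \<sigma>1 \<sigma>2 u
           = reduced_gain q K \<mu> \<sigma>0 \<sigma>1 \<sigma>2 v - K * \<sigma>0^2 * \<sigma>2^2 / (2 * (\<sigma>1^2 + \<sigma>2^2)) * (u - v)^2"
proof -
  define S where "S = \<sigma>1^2 + \<sigma>2^2"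
  have "S \<noteq> 0"
    using assms by (simp add: S_def add_nonneg_pos)
  then show ?thesis
    using assms(1-3) unfolding v_def reduced_gain_def retention_vertex_def S_def[symmetric]
    by (simp add: field_simps power2_eq_square) (simp add: S_def power2_eq_square algebra_simps)
qed

lemma hjb_gain_max_at_clamped_vertex:
  fixes q K \<mu> \<sigma>0 \<sigma>1 \<sigma>2 l h u a v w :: real
  assumes "K > 0" "\<sigma>0 \<noteq> 0" "\<sigma>2 \<noteq> 0" "u \<in> {l..h}"
    and v_eq: "v = max l (min h (retention_vertex q K \<mu> \<sigma>0 \<sigma>1 \<sigma>2))"
    and w_eq: "w = best_investment K \<mu> \<sigma>0 \<sigma>1 \<sigma>2 v"
  shows "hjb_gain q K \<mu> \<sigma>0 \<sigma>1 \<sigma>2 u a \<le> hjb_gain q K \<mu> \<sigma>0 \<sigma>1 \<sigma>2 v w"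
    and "hjb_gain q K \<mu> \<sigma>0 \<sigma>1 \<sigma>2 u a = hjb_gain q K \<mu> \<sigma>0 \<sigma>1 \<sigma>2 v w \<Longrightarrow> u = v \<and> a = w"
proof -
  let ?G = "hjb_gain q K \<mu> \<sigma>0 \<sigma>1 \<sigma>2"
  let ?R = "reduced_gain q K \<mu> \<sigma>0 \<sigma>1 \<sigma>2"
  let ?b = "best_investment K \<mu> \<sigma>0 \<sigma>1 \<sigma>2"
  define v0 where "v0 = retention_vertex q K \<mu> \<sigma>0 \<sigma>1 \<sigma>2"
  define S where "S = \<sigma>1^2 + \<sigma>2^2"
  define c where "c = K * \<sigma>0^2 * \<sigma>2^2 / (2 * S)"
  have "S > 0"
    using assms(3) by (simp add: S_def add_nonneg_pos)
  then have "c > 0" "K * S / 2 > 0"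
    using assms(1-3) by (simp_all add: c_def)
  have gain: "?G u' a' = ?R v0 - c * (u' - v0)^2 - K * S / 2 * (a' - ?b u')^2" for u' a'
  proof -
    have "K \<noteq> 0" "\<sigma>1^2 + \<sigma>2^2 \<noteq> 0"
      using assms(1) \<open>S > 0\<close> unfolding S_def by linarith+
    then have "?G u' a' = ?R u' - K * S / 2 * (a' - ?b u')^2"
      unfolding S_def by (rule hjb_gain_complete_square)
    moreover have "?R u' = ?R v0 - c * (u' - v0)^2"
      unfolding c_def S_def v0_def using \<open>K \<noteq> 0\<close> assms(2,3) by (rule reduced_gain_vertex_form)
    ultimately show ?thesis
      by simp
  qed
  have strictly_closer: "u \<noteq> v \<Longrightarrow> (v - v0)^2 < (u - v0)^2"
    using sq_dist_clamp_less[OF assms(4)] unfolding v_eq v0_def by simp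
  then have "c * (v - v0)^2 \<le> c * (u - v0)^2"
    using \<open>c > 0\<close> by (cases "u = v") simp_all
  moreover have Gvw: "?G v w = ?R v0 - c * (v - v0)^2"
    using gain[of v w] unfolding w_eq by simp
  moreover have investment_loss: "0 \<le> K * S / 2 * (a - ?b u)^2"
    using \<open>K * S / 2 > 0\<close> by simp
  ultimately show "?G u a \<le> ?G v w"
    unfolding gain[of u a] by linarith
  assume "?G u a = ?G v w"
  then have no_retention_loss: "c * (u - v0)^2 \<le> c * (v - v0)^2"
    and no_investment_loss: "K * S / 2 * (a - ?b u)^2 \<le> 0"
    using gain[of u a] Gvw investment_loss \<open>c * (v - v0)^2 \<le> c * (u - v0)^2\<close> by linarith+
  have "u = v"
  proof (rule ccontr)
    assume "u \<noteq> v"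
    then have "c * (v - v0)^2 < c * (u - v0)^2"
      using strictly_closer \<open>c > 0\<close> by simp
    with no_retention_loss show False
      by linarith
  qed
  moreover have "(a - ?b u)^2 \<le> 0"
    using no_investment_loss mult_le_cancel_left_pos[OF \<open>K * S / 2 > 0\<close>, of _ 0] by simp
  ultimately show "u = v \<and> a = w"
    unfolding w_eq by simp
qed

lemma hjb_part_proportional:
  "hjb_part (\<lambda>u. p - q + q * u) (\<lambda>u. \<sigma>0 * u) \<mu> \<sigma>1 \<sigma>2 Vx (- K * Vx) u a
     = Vx * (p - q + hjb_gain q K \<mu> \<sigma>0 \<sigma>1 \<sigma>2 u a)"
  unfolding hjb_part_def hjb_gain_def by (simp add: algebra_simps)

lemma sahara_A_pos: "\<alpha> > 0 \<Longrightarrow> b \<noteq> 0 \<Longrightarrow> sahara_A \<alpha> b d x > 0"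
  unfolding sahara_A_def by (simp add: add_pos_nonneg)

lemma u_star_eq_clamped_vertex:
  assumes "t \<in> {0..T}" "\<sigma>0 > 0" "s2 t y > 0" "A x > 0"
  shows "u_star T q \<sigma>0 A mu s1 s2 t x y
           = max 0 (min 1 (retention_vertex q (A x) (mu t y) \<sigma>0 (s1 t y) (s2 t y)))"
proof -
  define S where "S = (s1 t y)^2 + (s2 t y)^2"
  define N where "N = S * q - mu t y * \<sigma>0 * s1 t y"
  define D where "D = \<sigma>0^2 * (s2 t y)^2 * A x"
  have "S > 0" "D > 0"
    using assms(2-4) by (simp_all add: S_def D_def add_nonneg_pos)
  have "(t, x, y) \<in> region_A0 T q \<sigma>0 mu s1 s2 \<longleftrightarrow> q < mu t y * s1 t y * \<sigma>0 / S"
    using assms(1) unfolding region_A0_def S_def by simp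
  also have "\<dots> \<longleftrightarrow> N < 0"
    using \<open>S > 0\<close> unfolding N_def by (simp add: pos_less_divide_eq mult_ac)
  finally have A0: "(t, x, y) \<in> region_A0 T q \<sigma>0 mu s1 s2 \<longleftrightarrow> N < 0" .
  have "(t, x, y) \<in> region_A1 T q \<sigma>0 A mu s1 s2
          \<longleftrightarrow> \<sigma>0 * ((s2 t y)^2 * A x * \<sigma>0 + mu t y * s1 t y) / S < q"
    using assms(1) unfolding region_A1_def S_def by simp
  also have "\<dots> \<longleftrightarrow> D < N"
    using \<open>S > 0\<close> unfolding N_def D_def by (simp add: pos_divide_less_eq algebra_simps power2_eq_square)
  finally have A1: "(t, x, y) \<in> region_A1 T q \<sigma>0 A mu s1 s2 \<longleftrightarrow> D < N" .
  have vertex: "retention_vertex q (A x) (mu t y) \<sigma>0 (s1 t y) (s2 t y) = N / D"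
    unfolding retention_vertex_def N_def D_def S_def ..
  have "u_star T q \<sigma>0 A mu s1 s2 t x y = (if N < 0 then 0 else if D < N then 1 else N / D)"
    unfolding u_star_def A0 A1 vertex[symmetric] retention_vertex_def N_def D_def S_def ..
  then show ?thesis
    using \<open>D > 0\<close> by (simp add: vertex zero_le_divide_iff less_divide_eq_1_pos max_def min_def)
qed

theorem proposition5p2:
  fixes T p q \<sigma>0 \<alpha> b d :: real
    and mu s1 s2 :: "real \<Rightarrow> real \<Rightarrow> real"
    and U U' U'' :: "real \<Rightarrow> real"
    and Vt :: "real \<Rightarrow> real \<Rightarrow> real"
    and t x y :: real
  assumes T_pos: "T > 0"
    and pq: "p < q" and s0: "\<sigma>0 > 0"
    and ab: "\<alpha> > 0" "b > 0"
    and coeff_pos: "\<And>t y. mu t y > 0" "\<And>t y. s1 t y > 0" "\<And>t y. s2 t y > 0"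
    and coeff_bdd: "bounded (range (\<lambda>(t, y). mu t y))" "bounded (range (\<lambda>(t, y). s1 t y))"
                   "bounded (range (\<lambda>(t, y). s2 t y))"
    and coeff_lip: "\<exists>L. \<forall>t y t' y'. \<bar>mu t y - mu t' y'\<bar> \<le> L * dist (t, y) (t', y')"
                   "\<exists>L. \<forall>t y t' y'. \<bar>s1 t y - s1 t' y'\<bar> \<le> L * dist (t, y) (t', y')"
                   "\<exists>L. \<forall>t y t' y'. \<bar>s2 t y - s2 t' y'\<bar> \<le> L * dist (t, y) (t', y')"
    and sum_away: "\<exists>c>0. \<forall>t y. s1 t y + s2 t y \<ge> c"
    and U1: "\<And>z. (U has_real_derivative U' z) (at z)"
    and U2: "\<And>z. (U' has_real_derivative U'' z) (at z)"
    and Upos: "\<And>z. U' z > 0"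
    and sahara: "\<And>z. - U'' z / U' z = sahara_A \<alpha> b d z"
    and Vt_pos: "Vt t y > 0"
    and t_in: "t \<in> {0..T}"
  shows "let m = (\<lambda>u. p - q + q * u); sig = (\<lambda>u. \<sigma>0 * u);
             Vx = U' x * Vt t y; Vxx = U'' x * Vt t y;
             A = sahara_A \<alpha> b d;
             us = u_star T q \<sigma>0 A mu s1 s2 t x y;
             as = a_star T q \<sigma>0 A mu s1 s2 t x y;
             H = hjb_part m sig (mu t y) (s1 t y) (s2 t y) Vx Vxx
         in us \<in> {0..1} \<and>
            (\<forall>u \<in> {0..1}. \<forall>a. H u a \<le> H us as) \<and>
            (\<forall>u \<in> {0..1}. \<forall>a. H u a = H us as \<longrightarrow> u = us \<and> a = as)"
proof -
  define K where "K = sahara_A \<alpha> b d x"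
  define Vx where "Vx = U' x * Vt t y"
  have "K > 0"
    unfolding K_def using ab by (simp add: sahara_A_pos)
  have "Vx > 0"
    unfolding Vx_def using Upos Vt_pos by simp
  have "U'' x = - K * U' x"
    using sahara[of x] Upos[of x] unfolding K_def by (simp add: field_simps)
  then have Vxx: "U'' x * Vt t y = - K * Vx"
    unfolding Vx_def by simp
  have H: "hjb_part (\<lambda>u. p - q + q * u) (\<lambda>u. \<sigma>0 * u) (mu t y) (s1 t y) (s2 t y) Vx (U'' x * Vt t y)
      = (\<lambda>u a. Vx * (p - q + hjb_gain q K (mu t y) \<sigma>0 (s1 t y) (s2 t y) u a))"
    unfolding Vxx by (intro ext hjb_part_proportional)
  define us where "us = u_star T q \<sigma>0 (sahara_A \<alpha> b d) mu s1 s2 t x y"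
  define as where "as = a_star T q \<sigma>0 (sahara_A \<alpha> b d) mu s1 s2 t x y"
  have us: "us = max 0 (min 1 (retention_vertex q K (mu t y) \<sigma>0 (s1 t y) (s2 t y)))"
    using t_in s0 coeff_pos(3) \<open>K > 0\<close> unfolding us_def K_def
    by (rule u_star_eq_clamped_vertex)
  have as: "as = best_investment K (mu t y) \<sigma>0 (s1 t y) (s2 t y) us"
    unfolding as_def us_def K_def a_star_def best_investment_def ..
  have "us \<in> {0..1}"
    unfolding us by simp
  moreover note hjb_gain_max_at_clamped_vertex[OF \<open>K > 0\<close> _ _ _ us as]
  ultimately show ?thesis
    using \<open>Vx > 0\<close> s0 coeff_pos(3)[of t y]
    unfolding Let_def Vx_def[symmetric] H us_def[symmetric] as_def[symmetric]
    by (auto simp: mult_le_cancel_left_pos)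
qed

end
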